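(* Let $\mathcal G=(V_{\min},V_{\max},E,w,\lambda)$ be a discounted payoff game, $\sigma$ a joint strategy, and $\nu$ a basis valuation of $H$ minimising $f_\sigma$ over all solutions of $H$. Assume there are no local improvements of $\sigma$ for $\nu$, i.e. $\mathsf{offset}(\nu,(v,v'))\ge\mathsf{offset}(\nu,(v,\sigma(v)))$ for all $(v,v')\in E$. Let $E'$ be any set of edges with $E_\nu\subseteq E'\subseteq S^\sigma_\nu$ that contains an outgoing edge of every vertex. If $\nu$ does not define strategies for both players, then there is a joint strategy $\sigma'$ that is better than $\sigma$ and satisfies $(v,\sigma'(v))\in E'$ for all $v\in V$.
   Context: A discounted payoff game is a tuple $\mathcal G=(V_{\min},V_{\max},E,w,\lambda)$ with $V=V_{\min}\cup V_{\max}$ finite (disjoint union of Min and Max vertices), $E\subseteq V\times V$ with every vertex having an outgoing edge, $w:E\to\mathbb R$, $\lambda:E\to[0,1)$. A joint strategy is a map $\sigma:V\to V$ with $(v,\sigma(v))\in E$ for all $v$. $H$ is the system of inequations over $x\in\mathbb R^V$ containing, for each edge $e=(v,v')$, the inequation $I_e$: $x(v)\ge w_e+\lambda_e x(v')$ if $v\in V_{\max}$ and $x(v)\le w_e+\lambda_e x(v')$ if $v\in V_{\min}$. A basis of $H$ is a set of $|V|$ inequations of $H$ whose equality versions have a unique common solution; if that solution satisfies $H$ it is the basis valuation. $\mathsf{offset}(x,(v,v'))=x(v)-(w_{(v,v')}+\lambda_{(v,v')}x(v'))$ if $v\in V_{\max}$, and $(w_{(v,v')}+\lambda_{(v,v')}x(v'))-x(v)$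 otherwise; $f_\sigma(x)=\sum_{v\in V}\mathsf{offset}(x,(v,\sigma(v)))$. $S^\sigma_\nu=\{(v,v')\in E\mid \mathsf{offset}(\nu,(v,v'))=\mathsf{offset}(\nu,(v,\sigma(v)))\}$ (stale edges) and $E_\nu=\{(v,v')\in E\mid\mathsf{offset}(\nu,(v,v'))=0\}$. A valuation $x$ defines strategies for both players if every vertex $v$ has an outgoing edge $e$ with $I_e$ holding with equality at $x$. A joint strategy $\sigma'$ is better than $\sigma$ iff $\min\{f_{\sigma'}(x)\mid x \text{ solves } H\}<\min\{f_{\sigma}(x)\mid x\text{ solves } H\}$. *)

theory Defs
  imports Complex_Main
begin

type_synonym 'v edge = "'v \<times> 'v"

text \<open>A discounted payoff game with finite vertex type 'v (V = UNIV), partitioned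
  into Min vertices Vmin and Max vertices Vmax, edges E, weights w and discounts lam.\<close>
definition dpg :: "'v::finite set \<Rightarrow> 'v set \<Rightarrow> 'v edge set \<Rightarrow> ('v edge \<Rightarrow> real) \<Rightarrow> bool" where
  "dpg Vmin Vmax E lam \<longleftrightarrow>
     Vmin \<inter> Vmax = {} \<and> Vmin \<union> Vmax = UNIV \<and>
     (\<forall>v. \<exists>v'. (v, v') \<in> E) \<and>
     (\<forall>e\<in>E. 0 \<le> lam e \<and> lam e < 1)"

definition ineq :: "'v set \<Rightarrow> ('v edge \<Rightarrow> real) \<Rightarrow> ('v edge \<Rightarrow> real) \<Rightarrow> 'v edge \<Rightarrow> ('v \<Rightarrow> real) \<Rightarrow> bool" where
  "ineq Vmax w lam e x \<longleftrightarrow>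
     (if fst e \<in> Vmax then x (fst e) \<ge> w e + lam e * x (snd e)
      else x (fst e) \<le> w e + lam e * x (snd e))"

definition ineq_eq :: "('v edge \<Rightarrow> real) \<Rightarrow> ('v edge \<Rightarrow> real) \<Rightarrow> 'v edge \<Rightarrow> ('v \<Rightarrow> real) \<Rightarrow> bool" where
  "ineq_eq w lam e x \<longleftrightarrow> x (fst e) = w e + lam e * x (snd e)"

definition solves_H :: "'v set \<Rightarrow> 'v edge set \<Rightarrow> ('v edge \<Rightarrow> real) \<Rightarrow> ('v edge \<Rightarrow> real) \<Rightarrow> ('v \<Rightarrow> real) \<Rightarrow> bool" where
  "solves_H Vmax E w lam x \<longleftrightarrow> (\<forall>e\<in>E. ineq Vmax w lam e x)"

definition is_basis :: "'v::finite edge set \<Rightarrow> ('v edge \<Rightarrow> real) \<Rightarrow> ('v edge \<Rightarrow> real) \<Rightarrow> 'v edge set \<Rightarrow> bool" where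
  "is_basis E w lam B \<longleftrightarrow> B \<subseteq> E \<and> card B = card (UNIV :: 'v set) \<and>
     (\<exists>!x. \<forall>e\<in>B. ineq_eq w lam e x)"

definition basis_valuation :: "'v::finite set \<Rightarrow> 'v edge set \<Rightarrow> ('v edge \<Rightarrow> real) \<Rightarrow> ('v edge \<Rightarrow> real) \<Rightarrow> ('v \<Rightarrow> real) \<Rightarrow> bool" where
  "basis_valuation Vmax E w lam x \<longleftrightarrow>
     (\<exists>B. is_basis E w lam B \<and> (\<forall>e\<in>B. ineq_eq w lam e x)) \<and> solves_H Vmax E w lam x"

definition offset :: "'v set \<Rightarrow> ('v edge \<Rightarrow> real) \<Rightarrow> ('v edge \<Rightarrow> real) \<Rightarrow> ('v \<Rightarrow> real) \<Rightarrow> 'v edge \<Rightarrow> real" where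
  "offset Vmax w lam x e =
     (if fst e \<in> Vmax then x (fst e) - (w e + lam e * x (snd e))
      else (w e + lam e * x (snd e)) - x (fst e))"

definition joint_strategy :: "'v edge set \<Rightarrow> ('v \<Rightarrow> 'v) \<Rightarrow> bool" where
  "joint_strategy E \<sigma> \<longleftrightarrow> (\<forall>v. (v, \<sigma> v) \<in> E)"

definition f_strat :: "'v::finite set \<Rightarrow> ('v edge \<Rightarrow> real) \<Rightarrow> ('v edge \<Rightarrow> real) \<Rightarrow> ('v \<Rightarrow> 'v) \<Rightarrow> ('v \<Rightarrow> real) \<Rightarrow> real" where
  "f_strat Vmax w lam \<sigma> x = (\<Sum>v\<in>UNIV. offset Vmax w lam x (v, \<sigma> v))"

definition stale :: "'v set \<Rightarrow> 'v edge set \<Rightarrow> ('v edge \<Rightarrow> real) \<Rightarrow> ('v edge \<Rightarrow> real) \<Rightarrow> ('v \<Rightarrow> 'v) \<Rightarrow> ('v \<Rightarrow> real) \<Rightarrow> 'v edge set" where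
  "stale Vmax E w lam \<sigma> \<nu> =
     {(v, v'). (v, v') \<in> E \<and> offset Vmax w lam \<nu> (v, v') = offset Vmax w lam \<nu> (v, \<sigma> v)}"

definition tight :: "'v set \<Rightarrow> 'v edge set \<Rightarrow> ('v edge \<Rightarrow> real) \<Rightarrow> ('v edge \<Rightarrow> real) \<Rightarrow> ('v \<Rightarrow> real) \<Rightarrow> 'v edge set" where
  "tight Vmax E w lam \<nu> = {e \<in> E. offset Vmax w lam \<nu> e = 0}"

definition defines_strategies :: "'v edge set \<Rightarrow> ('v edge \<Rightarrow> real) \<Rightarrow> ('v edge \<Rightarrow> real) \<Rightarrow> ('v \<Rightarrow> real) \<Rightarrow> bool" where
  "defines_strategies E w lam x \<longleftrightarrow> (\<forall>v. \<exists>v'. (v, v') \<in> E \<and> ineq_eq w lam (v, v') x)"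

text \<open>sigma' is better than sigma: the minimum of f over solutions of H is smaller.
  (The minimum is taken as an infimum; it is attained whenever H is solvable.)\<close>
definition better :: "'v::finite set \<Rightarrow> 'v edge set \<Rightarrow> ('v edge \<Rightarrow> real) \<Rightarrow> ('v edge \<Rightarrow> real) \<Rightarrow> ('v \<Rightarrow> 'v) \<Rightarrow> ('v \<Rightarrow> 'v) \<Rightarrow> bool" where
  "better Vmax E w lam \<sigma>' \<sigma> \<longleftrightarrow>
     (INF x\<in>{x. solves_H Vmax E w lam x}. f_strat Vmax w lam \<sigma>' x)
       < (INF x\<in>{x. solves_H Vmax E w lam x}. f_strat Vmax w lam \<sigma> x)"

end

theory Submission
  imports Defs
begin

text \<open>Some vertex has no outgoing edge tight at \<nu>. Let \<delta> be the value of an auxiliary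
  zero-weight discounted game on the tight edges, in which every vertex without tight edges is a sink
  that is bad for its owner. Moving \<nu> along \<delta> does not decrease the slack of any tight inequation,
  keeps one tight edge at every vertex that has one, and strictly decreases the slack of every edge
  leaving a vertex without tight edges; these slacks are positive, so \<open>\<nu> + t\<delta>\<close> still solves H for
  small \<open>t > 0\<close>. A strategy \<sigma>' in E' choosing such edges then has
  \<open>f\<^sub>\<sigma>\<^sub>'(\<nu> + t\<delta>) < f\<^sub>\<sigma>\<^sub>'(\<nu>) = f\<^sub>\<sigma>(\<nu>)\<close>, the equality because E' consists of stale edges.\<close>

lemma monotone_fixpoint_in_box:
  fixes G :: "('a \<Rightarrow> 'b::conditionally_complete_lattice) \<Rightarrow> 'a \<Rightarrow> 'b"
  assumes "l \<le> h"
    and mono: "\<And>d d' u. (\<And>v. d v \<le> d' v) \<Longrightarrow> G d u \<le> G d' u"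
    and box: "\<And>d u. (\<And>v. l \<le> d v \<and> d v \<le> h) \<Longrightarrow> l \<le> G d u \<and> G d u \<le> h"
  obtains d where "\<And>v. l \<le> d v \<and> d v \<le> h" and "G d = d"
proof -
  define S where "S = {d. (\<forall>v. l \<le> d v \<and> d v \<le> h) \<and> (\<forall>v. d v \<le> G d v)}"
  define m where "m v = Sup ((\<lambda>d. d v) ` S)" for v
  have bottom: "(\<lambda>_. l) \<in> S"
    unfolding S_def using box[of "\<lambda>_. l"] \<open>l \<le> h\<close> by simp
  have nonempty: "(\<lambda>d. d v) ` S \<noteq> {}" for v
    using bottom by auto
  have upper: "d v \<le> m v" if "d \<in> S" for d v
    unfolding m_def using that by (intro cSup_upper) (auto simp: S_def bdd_above_def)
  have m_box: "l \<le> m v \<and> m v \<le> h" for v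
  proof
    show "l \<le> m v" using upper[OF bottom] by simp
    show "m v \<le> h" unfolding m_def using nonempty by (rule cSup_least) (auto simp: S_def)
  qed
  have m_post: "m v \<le> G m v" for v
    unfolding m_def[of v]
  proof (rule cSup_least[OF nonempty])
    fix x assume "x \<in> (\<lambda>d. d v) ` S"
    then obtain d where "d \<in> S" and "x = d v" by auto
    then have "x \<le> G d v" by (auto simp: S_def)
    also have "G d v \<le> G m v" using mono upper[OF \<open>d \<in> S\<close>] by blast
    finally show "x \<le> G m v" .
  qed
  have "G m \<in> S"
    unfolding S_def using box[of m] m_box mono[of m "G m"] m_post by blast
  then have "G m = m"
    using upper m_post by (intro ext antisym) auto
  with m_box that show ?thesis by blast
qed

lemma ineq_iff_offset_nonneg: "ineq Vmax w lam e x \<longleftrightarrow> 0 \<le> offset Vmax w lam x e"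
  unfolding ineq_def offset_def by auto

lemma solves_H_offset_nonneg:
  "solves_H Vmax E w lam x \<Longrightarrow> e \<in> E \<Longrightarrow> 0 \<le> offset Vmax w lam x e"
  unfolding solves_H_def by (simp add: ineq_iff_offset_nonneg)

lemma defines_strategies_iff_tight:
  "defines_strategies E w lam x \<longleftrightarrow> (\<forall>v. \<exists>v'. (v, v') \<in> tight Vmax E w lam x)"
proof -
  have "e \<in> tight Vmax E w lam x \<longleftrightarrow> e \<in> E \<and> ineq_eq w lam e x" for e
    unfolding tight_def offset_def ineq_eq_def by auto
  then show ?thesis unfolding defines_strategies_def by simp
qed

lemma offset_add_scaled:
  "offset Vmax w lam (\<lambda>v. x v + t * d v) e
     = offset Vmax w lam x e + t * offset Vmax (\<lambda>_. 0) lam d e"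
  unfolding offset_def by (simp add: algebra_simps)

lemma f_strat_add_scaled:
  "f_strat Vmax w lam \<sigma> (\<lambda>v. x v + t * d v)
     = f_strat Vmax w lam \<sigma> x + t * f_strat Vmax (\<lambda>_. 0) lam \<sigma> d"
  unfolding f_strat_def offset_add_scaled by (simp add: sum.distrib sum_distrib_left)

lemma f_strat_nonneg:
  "joint_strategy E \<sigma> \<Longrightarrow> solves_H Vmax E w lam x \<Longrightarrow> 0 \<le> f_strat Vmax w lam \<sigma> x"
  unfolding f_strat_def joint_strategy_def by (auto intro: sum_nonneg solves_H_offset_nonneg)

lemma f_strat_eq_if_stale:
  assumes "\<And>v. (v, \<sigma>' v) \<in> stale Vmax E w lam \<sigma> \<nu>"
  shows "f_strat Vmax w lam \<sigma>' \<nu> = f_strat Vmax w lam \<sigma> \<nu>"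
  using assms unfolding f_strat_def stale_def by simp

lemma better_if_below_minimum:
  assumes "joint_strategy E \<sigma>'" and "solves_H Vmax E w lam x" and "solves_H Vmax E w lam \<nu>"
    and "\<And>y. solves_H Vmax E w lam y \<Longrightarrow> f_strat Vmax w lam \<sigma> \<nu> \<le> f_strat Vmax w lam \<sigma> y"
    and "f_strat Vmax w lam \<sigma>' x < f_strat Vmax w lam \<sigma> \<nu>"
  shows "better Vmax E w lam \<sigma>' \<sigma>"
proof -
  let ?Sol = "{y. solves_H Vmax E w lam y}"
  have "bdd_below (f_strat Vmax w lam \<sigma>' ` ?Sol)"
    using f_strat_nonneg[OF assms(1)] by (intro bdd_belowI2[where m = 0]) auto
  then have "(INF y\<in>?Sol. f_strat Vmax w lam \<sigma>' y) \<le> f_strat Vmax w lam \<sigma>' x"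
    using assms(2) by (intro cINF_lower) auto
  also have "\<dots> < f_strat Vmax w lam \<sigma> \<nu>" by fact
  also have "\<dots> \<le> (INF y\<in>?Sol. f_strat Vmax w lam \<sigma> y)"
    using assms(3,4) by (intro cINF_greatest) auto
  finally show ?thesis unfolding better_def .
qed

lemma solves_H_step_along:
  fixes x d :: "'v::finite \<Rightarrow> real"
  assumes sol: "solves_H Vmax E w lam x"
    and tight_nonneg: "\<And>e. e \<in> tight Vmax E w lam x \<Longrightarrow> 0 \<le> offset Vmax (\<lambda>_. 0) lam d e"
  obtains t where "t > 0" and "solves_H Vmax E w lam (\<lambda>v. x v + t * d v)"
proof -
  let ?off = "offset Vmax w lam x" and ?D = "offset Vmax (\<lambda>_. 0) lam d"
  define N where "N = {e \<in> E. ?D e < 0}"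
  define t where "t = Min (insert 1 ((\<lambda>e. ?off e / - ?D e) ` N))"
  have slack: "0 < ?off e" if "e \<in> N" for e
  proof -
    have "e \<notin> tight Vmax E w lam x" using that tight_nonneg[of e] by (auto simp: N_def)
    with that show ?thesis using solves_H_offset_nonneg[OF sol, of e] by (auto simp: N_def tight_def)
  qed
  have "0 < ?off e / - ?D e" if "e \<in> N" for e
    using slack[OF that] that by (simp add: N_def divide_pos_neg)
  then have "t > 0"
    unfolding t_def by simp
  moreover have "0 \<le> ?off e + t * ?D e" if "e \<in> E" for e
  proof (cases "e \<in> N")
    case True
    then have "t \<le> ?off e / - ?D e" unfolding t_def by (intro Min_le) auto
    with True show ?thesis by (simp add: N_def field_simps)
  next
    case False
    with that \<open>t > 0\<close> solves_H_offset_nonneg[OF sol that] show ?thesis by (simp add: N_def)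
  qed
  ultimately show ?thesis
    using that unfolding solves_H_def ineq_iff_offset_nonneg offset_add_scaled by blast
qed

text \<open>The Bellman operator of the auxiliary game on the edges T; a vertex without T-edges is a
  sink of value \<open>-1\<close> if it belongs to Max and \<open>1\<close> otherwise.\<close>
definition direction_op :: "'v set \<Rightarrow> 'v edge set \<Rightarrow> ('v edge \<Rightarrow> real) \<Rightarrow> ('v \<Rightarrow> real) \<Rightarrow> 'v \<Rightarrow> real"
  where "direction_op Vmax T lam d u =
    (if \<forall>v. (u, v) \<notin> T then (if u \<in> Vmax then -1 else 1)
     else if u \<in> Vmax then Max ((\<lambda>v. lam (u, v) * d v) ` {v. (u, v) \<in> T})
     else Min ((\<lambda>v. lam (u, v) * d v) ` {v. (u, v) \<in> T}))"

lemma direction_op_attained: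
  fixes T :: "'v::finite edge set"
  assumes "(u, v) \<in> T"
  obtains v' where "(u, v') \<in> T" and "direction_op Vmax T lam d u = lam (u, v') * d v'"
proof -
  let ?vals = "(\<lambda>v. lam (u, v) * d v) ` {v. (u, v) \<in> T}"
  have "finite ?vals" and "?vals \<noteq> {}" using assms by auto
  then have "Max ?vals \<in> ?vals" and "Min ?vals \<in> ?vals" by simp_all
  with assms have "\<exists>v'. (u, v') \<in> T \<and> direction_op Vmax T lam d u = lam (u, v') * d v'"
    unfolding direction_op_def by (cases "u \<in> Vmax") auto
  with that show ?thesis by blast
qed

lemma direction_op_bound:
  fixes T :: "'v::finite edge set"
  assumes "(u, v) \<in> T"
  shows "if u \<in> Vmax then lam (u, v) * d v \<le> direction_op Vmax T lam d u
         else direction_op Vmax T lam d u \<le> lam (u, v) * d v"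
  using assms unfolding direction_op_def by (auto intro: Max_ge Min_le)

lemma direction_op_mono:
  fixes T :: "'v::finite edge set"
  assumes lam_nonneg: "\<And>e. e \<in> T \<Longrightarrow> 0 \<le> lam e" and le: "\<And>v. d v \<le> d' v"
  shows "direction_op Vmax T lam d u \<le> direction_op Vmax T lam d' u"
proof (cases "\<exists>v. (u, v) \<in> T")
  case False
  then show ?thesis by (simp add: direction_op_def)
next
  case True
  then obtain v where v: "(u, v) \<in> T" by blast
  have step: "lam (u, v') * d v' \<le> lam (u, v') * d' v'" if "(u, v') \<in> T" for v'
    using le[of v'] lam_nonneg[OF that] by (rule mult_left_mono)
  show ?thesis
  proof (cases "u \<in> Vmax")
    case True
    obtain v' where v': "(u, v') \<in> T" and eq: "direction_op Vmax T lam d u = lam (u, v') * d v'"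
      using direction_op_attained[OF v] .
    have "lam (u, v') * d v' \<le> lam (u, v') * d' v'" by (rule step[OF v'])
    also have "\<dots> \<le> direction_op Vmax T lam d' u"
      using direction_op_bound[OF v', of Vmax lam d'] True by simp
    finally show ?thesis using eq by simp
  next
    case False
    obtain v' where v': "(u, v') \<in> T" and eq: "direction_op Vmax T lam d' u = lam (u, v') * d' v'"
      using direction_op_attained[OF v] .
    have "direction_op Vmax T lam d u \<le> lam (u, v') * d v'"
      using direction_op_bound[OF v', of Vmax lam d] False by simp
    also have "\<dots> \<le> lam (u, v') * d' v'" by (rule step[OF v'])
    finally show ?thesis using eq by simp
  qed
qed

lemma direction_op_bounded:
  fixes T :: "'v::finite edge set"
  assumes "\<And>e. e \<in> T \<Longrightarrow> \<bar>lam e\<bar> \<le> 1" and "\<And>v. \<bar>d v\<bar> \<le> 1"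
  shows "\<bar>direction_op Vmax T lam d u\<bar> \<le> 1"
proof (cases "\<exists>v. (u, v) \<in> T")
  case True
  then obtain v where "(u, v) \<in> T" and "direction_op Vmax T lam d u = lam (u, v) * d v"
    using direction_op_attained by metis
  with assms show ?thesis by (simp add: abs_mult mult_le_one)
next
  case False
  then show ?thesis by (simp add: direction_op_def)
qed

lemma descent_direction:
  fixes T E :: "'v::finite edge set"
  assumes "T \<subseteq> E" and lam: "\<And>e. e \<in> E \<Longrightarrow> 0 \<le> lam e \<and> lam e < 1"
  obtains \<delta> where "\<And>e. e \<in> T \<Longrightarrow> 0 \<le> offset Vmax (\<lambda>_. 0) lam \<delta> e"
    and "\<And>u v. (u, v) \<in> T \<Longrightarrow> \<exists>v'. (u, v') \<in> T \<and> offset Vmax (\<lambda>_. 0) lam \<delta> (u, v') = 0"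
    and "\<And>u v. (\<And>v'. (u, v') \<notin> T) \<Longrightarrow> (u, v) \<in> E \<Longrightarrow> offset Vmax (\<lambda>_. 0) lam \<delta> (u, v) < 0"
proof -
  let ?G = "direction_op Vmax T lam"
  have mono: "?G d u \<le> ?G d' u" if "\<And>v. d v \<le> d' v" for d d' u
    using lam \<open>T \<subseteq> E\<close> that by (blast intro: direction_op_mono)
  have box: "-1 \<le> ?G d u \<and> ?G d u \<le> 1" if "\<And>v. -1 \<le> d v \<and> d v \<le> 1" for d u
    using direction_op_bounded[of T lam d Vmax u] lam \<open>T \<subseteq> E\<close> that by (force simp: abs_le_iff)
  obtain \<delta> where \<delta>_box: "\<And>v. -1 \<le> \<delta> v \<and> \<delta> v \<le> 1" and fixed: "?G \<delta> = \<delta>"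
    using monotone_fixpoint_in_box[of "-1" 1 ?G, OF _ mono box] by auto
  have "0 \<le> offset Vmax (\<lambda>_. 0) lam \<delta> e" if "e \<in> T" for e
  proof (cases e)
    case (Pair u v)
    with that direction_op_bound[of u v T Vmax lam \<delta>] fixed show ?thesis by (auto simp: offset_def)
  qed
  moreover have "\<exists>v'. (u, v') \<in> T \<and> offset Vmax (\<lambda>_. 0) lam \<delta> (u, v') = 0"
    if T_edge: "(u, v) \<in> T" for u v
  proof -
    obtain v' where "(u, v') \<in> T" and "?G \<delta> u = lam (u, v') * \<delta> v'"
      using direction_op_attained[OF T_edge] .
    with fixed show ?thesis by (auto simp: offset_def)
  qed
  moreover have "offset Vmax (\<lambda>_. 0) lam \<delta> (u, v) < 0"
    if stuck: "\<And>v'. (u, v') \<notin> T" and "(u, v) \<in> E" for u v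
  proof -
    have "lam (u, v) * \<bar>\<delta> v\<bar> \<le> lam (u, v)"
      using \<delta>_box[of v] lam[OF \<open>(u, v) \<in> E\<close>] by (simp add: mult_left_le abs_le_iff)
    then have "\<bar>lam (u, v) * \<delta> v\<bar> < 1" using lam[OF \<open>(u, v) \<in> E\<close>] by (simp add: abs_mult)
    moreover have "\<delta> u = (if u \<in> Vmax then -1 else 1)"
      using stuck fun_cong[OF fixed, of u] by (simp add: direction_op_def)
    ultimately show ?thesis by (auto simp: offset_def)
  qed
  ultimately show ?thesis by (rule that)
qed

lemma descending_strategy:
  fixes T E' E :: "'v::finite edge set"
  assumes "T \<subseteq> E'" and "E' \<subseteq> E" and out: "\<And>u. \<exists>v. (u, v) \<in> E'"
    and kept: "\<And>u v. (u, v) \<in> T \<Longrightarrow> \<exists>v'. (u, v') \<in> T \<and> offset Vmax (\<lambda>_. 0) lam \<delta> (u, v') = 0"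
    and tightening: "\<And>u v. (\<And>v'. (u, v') \<notin> T) \<Longrightarrow> (u, v) \<in> E \<Longrightarrow> offset Vmax (\<lambda>_. 0) lam \<delta> (u, v) < 0"
    and stuck: "\<And>v'. (v\<^sub>0, v') \<notin> T"
  obtains \<sigma>' where "\<And>u. (u, \<sigma>' u) \<in> E'" and "f_strat Vmax (\<lambda>_. 0) lam \<sigma>' \<delta> < 0"
proof -
  have "\<forall>u. \<exists>v. (u, v) \<in> E' \<and> offset Vmax (\<lambda>_. 0) lam \<delta> (u, v) \<le> 0
          \<and> ((\<forall>v'. (u, v') \<notin> T) \<longrightarrow> offset Vmax (\<lambda>_. 0) lam \<delta> (u, v) < 0)"
  proof
    fix u
    show "\<exists>v. (u, v) \<in> E' \<and> offset Vmax (\<lambda>_. 0) lam \<delta> (u, v) \<le> 0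
          \<and> ((\<forall>v'. (u, v') \<notin> T) \<longrightarrow> offset Vmax (\<lambda>_. 0) lam \<delta> (u, v) < 0)"
    proof (cases "\<exists>v. (u, v) \<in> T")
      case True
      with kept \<open>T \<subseteq> E'\<close> show ?thesis by fastforce
    next
      case False
      with out tightening \<open>E' \<subseteq> E\<close> show ?thesis by (meson less_imp_le subsetD)
    qed
  qed
  then obtain \<sigma>' where \<sigma>': "\<forall>u. (u, \<sigma>' u) \<in> E' \<and> offset Vmax (\<lambda>_. 0) lam \<delta> (u, \<sigma>' u) \<le> 0
          \<and> ((\<forall>v'. (u, v') \<notin> T) \<longrightarrow> offset Vmax (\<lambda>_. 0) lam \<delta> (u, \<sigma>' u) < 0)"
    by (auto dest: choice)
  have "f_strat Vmax (\<lambda>_. 0) lam \<sigma>' \<delta> < (\<Sum>u::'v\<in>UNIV. 0)"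
    unfolding f_strat_def
  proof (rule sum_strict_mono_ex1)
    show "\<forall>u\<in>UNIV. offset Vmax (\<lambda>_. 0) lam \<delta> (u, \<sigma>' u) \<le> 0" using \<sigma>' by blast
    show "\<exists>u\<in>UNIV. offset Vmax (\<lambda>_. 0) lam \<delta> (u, \<sigma>' u) < 0" using \<sigma>' stuck by blast
  qed simp
  then show ?thesis using \<sigma>' by (intro that[of \<sigma>']) auto
qed

theorem lemma4p3:
  fixes Vmin Vmax :: "'v::finite set" and E :: "'v edge set"
    and w lam :: "'v edge \<Rightarrow> real" and \<sigma> :: "'v \<Rightarrow> 'v" and \<nu> :: "'v \<Rightarrow> real"
    and E' :: "'v edge set"
  assumes game: "dpg Vmin Vmax E lam"
    and strat: "joint_strategy E \<sigma>"
    and basis: "basis_valuation Vmax E w lam \<nu>"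
    and minimal: "\<And>x. solves_H Vmax E w lam x \<Longrightarrow> f_strat Vmax w lam \<sigma> \<nu> \<le> f_strat Vmax w lam \<sigma> x"
    and no_local: "\<And>v v'. (v, v') \<in> E \<Longrightarrow>
                      offset Vmax w lam \<nu> (v, v') \<ge> offset Vmax w lam \<nu> (v, \<sigma> v)"
    and E'_lower: "tight Vmax E w lam \<nu> \<subseteq> E'"
    and E'_upper: "E' \<subseteq> stale Vmax E w lam \<sigma> \<nu>"
    and E'_out: "\<And>v. \<exists>v'. (v, v') \<in> E'"
    and not_def: "\<not> defines_strategies E w lam \<nu>"
  shows "\<exists>\<sigma>'. joint_strategy E \<sigma>' \<and> better Vmax E w lam \<sigma>' \<sigma> \<and> (\<forall>v. (v, \<sigma>' v) \<in> E')"
proof -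
  let ?T = "tight Vmax E w lam \<nu>"
  have lam: "0 \<le> lam e \<and> lam e < 1" if "e \<in> E" for e
    using game that by (simp add: dpg_def)
  have \<nu>_sol: "solves_H Vmax E w lam \<nu>"
    using basis by (simp add: basis_valuation_def)
  have "?T \<subseteq> E" and "E' \<subseteq> E"
    using E'_upper by (auto simp: tight_def stale_def)
  obtain \<delta> where \<delta>_tight: "\<And>e. e \<in> ?T \<Longrightarrow> 0 \<le> offset Vmax (\<lambda>_. 0) lam \<delta> e"
    and \<delta>_kept: "\<And>u v. (u, v) \<in> ?T \<Longrightarrow> \<exists>v'. (u, v') \<in> ?T \<and> offset Vmax (\<lambda>_. 0) lam \<delta> (u, v') = 0"
    and \<delta>_tightening: "\<And>u v. (\<And>v'. (u, v') \<notin> ?T) \<Longrightarrow> (u, v) \<in> E \<Longrightarrow> offset Vmax (\<lambda>_. 0) lam \<delta> (u, v) < 0"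
    using descent_direction[of ?T E lam Vmax] \<open>?T \<subseteq> E\<close> lam by blast
  obtain v\<^sub>0 where stuck: "\<And>v'. (v\<^sub>0, v') \<notin> ?T"
    using not_def defines_strategies_iff_tight[of E w lam \<nu> Vmax] by blast
  obtain \<sigma>' where \<sigma>'_E': "\<And>u. (u, \<sigma>' u) \<in> E'" and descent: "f_strat Vmax (\<lambda>_. 0) lam \<sigma>' \<delta> < 0"
    using descending_strategy[of ?T E' E Vmax lam \<delta> v\<^sub>0] E'_lower \<open>E' \<subseteq> E\<close> E'_out \<delta>_kept \<delta>_tightening stuck
    by blast
  obtain t where "t > 0" and x_sol: "solves_H Vmax E w lam (\<lambda>v. \<nu> v + t * \<delta> v)"
    using solves_H_step_along[OF \<nu>_sol \<delta>_tight] .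
  have "f_strat Vmax w lam \<sigma>' \<nu> = f_strat Vmax w lam \<sigma> \<nu>"
    using \<sigma>'_E' E'_upper by (intro f_strat_eq_if_stale) blast
  moreover have "t * f_strat Vmax (\<lambda>_. 0) lam \<sigma>' \<delta> < 0"
    using \<open>t > 0\<close> descent by (rule mult_pos_neg)
  ultimately have "f_strat Vmax w lam \<sigma>' (\<lambda>v. \<nu> v + t * \<delta> v) < f_strat Vmax w lam \<sigma> \<nu>"
    by (simp add: f_strat_add_scaled)
  moreover have "joint_strategy E \<sigma>'"
    using \<sigma>'_E' \<open>E' \<subseteq> E\<close> by (auto simp: joint_strategy_def)
  ultimately show ?thesis
    using better_if_below_minimum[OF _ x_sol \<nu>_sol minimal] \<sigma>'_E' by blast
qed

end
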